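(* For every instance of the game and every facility placement profile $\mathbf{s}$, every minimum neighborhood set $\mathrm{MNS}_{\mathbf{s}}(F^*,V^* )$ is uniquely determined, hence the class set $\mathcal{C}=\{C_1,C_2,\ldots\}$ of $\mathbf{s}$ is unique; moreover $\ell(C_i)<\ell(C_{i+1})$ for all $i\ge1$ for which $C_{i+1}$ exists.
   Context: Setting: a finite directed graph $H=(V,E,w)$ with vertex weights $w:V\to\mathbb{Q}_{>0}$ (vertices are clients), $w(X)=\sum_{v\in X}w(v)$, a finite set $F$ of facility agents, and a facility placement profile $\mathbf{s}=(s_f)_{f\in F}$ with $s_f\in V$. For $v\in V$ let $N(v)=\{v\}\cup\{u:(v,u)\in E\}$, $N_{\mathbf{s}}(v)=\{f\in F:s_f\in N(v)\}$, $A_{\mathbf{s}}(f)=\{v\in V: f\in N_{\mathbf{s}}(v)\}$ and $A_{\mathbf{s}}(T)=\bigcup_{f\in T}A_{\mathbf{s}}(f)$ for $T\subseteq F$. For nonempty $F^*\subseteq F$ and $V^*\subseteq V$, the minimum neighborhood set $\mathrm{MNS}_{\mathbf{s}}(F^*,V^* )$ is a subset of $F^*$ of largest cardinality among the nonempty $T\subseteq F^*$ minimizing $\frac{w(A_{\mathbf{s}}(T)\cap V^* )}{|T|}$. The class set is defined inductively: for $i\ge1$, while $F\setminus\bigcup_{j<i}F_j\neq\varnothing$, let $F_i=\mathrm{MNS}_{\mathbf{s}}\big(F\setminus\bigcup_{j<i}F_j,\ V\setminus\bigcup_{j<i}V_j\big)$ and $V_i=A_{\mathbf{s}}(F_i)\setminus\bigcup_{j<i}V_j$;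 the class is $C_i=(F_i,V_i)$ with average load $\ell(C_i)=w(V_i)/|F_i|$. *)

theory Defs
  imports Main "HOL.Rat"
begin

definition nbh :: "('v \<times> 'v) set \<Rightarrow> 'v \<Rightarrow> 'v set" where
  "nbh E v = insert v {u. (v, u) \<in> E}"

definition Aset :: "'v set \<Rightarrow> ('v \<times> 'v) set \<Rightarrow> ('f \<Rightarrow> 'v) \<Rightarrow> 'f set \<Rightarrow> 'v set" where
  "Aset V E s T = {v \<in> V. \<exists>f \<in> T. s f \<in> nbh E v}"

definition ratio :: "'v set \<Rightarrow> ('v \<times> 'v) set \<Rightarrow> ('v \<Rightarrow> rat) \<Rightarrow> ('f \<Rightarrow> 'v)
    \<Rightarrow> 'v set \<Rightarrow> 'f set \<Rightarrow> rat" where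
  "ratio V E w s Vst T = sum w (Aset V E s T \<inter> Vst) / of_nat (card T)"

definition is_MNS :: "'v set \<Rightarrow> ('v \<times> 'v) set \<Rightarrow> ('v \<Rightarrow> rat) \<Rightarrow> ('f \<Rightarrow> 'v)
    \<Rightarrow> 'f set \<Rightarrow> 'v set \<Rightarrow> 'f set \<Rightarrow> bool" where
  "is_MNS V E w s Fst Vst T \<longleftrightarrow>
     T \<subseteq> Fst \<and> T \<noteq> {} \<and>
     (\<forall>T'. T' \<subseteq> Fst \<and> T' \<noteq> {} \<longrightarrow> ratio V E w s Vst T \<le> ratio V E w s Vst T') \<and>
     (\<forall>T'. T' \<subseteq> Fst \<and> T' \<noteq> {} \<and> ratio V E w s Vst T' = ratio V E w s Vst T
           \<longrightarrow> card T' \<le> card T)"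

text \<open>A class set of length k, 0-indexed: class C_(i+1) of the paper is (Fc i, Vc i).\<close>
definition is_class_seq :: "'v set \<Rightarrow> ('v \<times> 'v) set \<Rightarrow> ('v \<Rightarrow> rat) \<Rightarrow> ('f \<Rightarrow> 'v)
    \<Rightarrow> 'f set \<Rightarrow> nat \<Rightarrow> (nat \<Rightarrow> 'f set) \<Rightarrow> (nat \<Rightarrow> 'v set) \<Rightarrow> bool" where
  "is_class_seq V E w s F k Fc Vc \<longleftrightarrow>
     (\<forall>i<k. F - \<Union>(Fc ` {..<i}) \<noteq> {} \<and>
            is_MNS V E w s (F - \<Union>(Fc ` {..<i})) (V - \<Union>(Vc ` {..<i})) (Fc i) \<and>
            Vc i = Aset V E s (Fc i) - \<Union>(Vc ` {..<i})) \<and>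
     F - \<Union>(Fc ` {..<k}) = {}"

definition load :: "('v \<Rightarrow> rat) \<Rightarrow> 'f set \<Rightarrow> 'v set \<Rightarrow> rat" where
  "load w Fi Vi = sum w Vi / of_nat (card Fi)"

end

theory Submission
  imports Defs
begin

(* Write g(T) for the weight of the clients in V* covered by T, so that the ratio of T is
  g(T)/|T|. Being the weight of a union of neighbourhoods, g is submodular. Hence if T1 and T2
  both attain the minimum ratio c, then
    g(T1 \<union> T2) \<le> g(T1) + g(T2) - g(T1 \<inter> T2) \<le> c |T1| + c |T2| - c |T1 \<inter> T2| = c |T1 \<union> T2|,
  so the minimizers are closed under union and the largest one is unique; the class set, built
  from these forced choices, is unique too. For consecutive classes, F_i \<union> F_(i+1) is a
  strictly larger candidate at stage i, so its ratio, the mediant of w(V_i)/|F_i| and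
  w(V_(i+1))/|F_(i+1)|, exceeds l(C_i) = w(V_i)/|F_i|; hence so does l(C_(i+1)). *)

lemma sum_Un_add_le:
  fixes w :: "'a \<Rightarrow> 'b::ordered_comm_monoid_add"
  assumes "finite X1" "finite X2" "Y \<subseteq> X1 \<inter> X2" "\<forall>x \<in> X1 \<inter> X2. 0 \<le> w x"
  shows "sum w (X1 \<union> X2) + sum w Y \<le> sum w X1 + sum w X2"
proof -
  have "sum w Y \<le> sum w (X1 \<inter> X2)"
    using assms by (intro sum_mono2) auto
  then have "sum w (X1 \<union> X2) + sum w Y \<le> sum w (X1 \<union> X2) + sum w (X1 \<inter> X2)"
    by (rule add_left_mono)
  also have "\<dots> = sum w X1 + sum w X2"
    using assms(1,2) by (rule sum.union_inter)
  finally show ?thesis .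
qed

lemma submodular_Un_le_mult_card:
  fixes g :: "'a set \<Rightarrow> 'b::linordered_idom"
  assumes "finite A" "finite B"
    and "g (A \<union> B) + g (A \<inter> B) \<le> g A + g B"
    and "g A \<le> c * of_nat (card A)" "g B \<le> c * of_nat (card B)"
    and "c * of_nat (card (A \<inter> B)) \<le> g (A \<inter> B)"
  shows "g (A \<union> B) \<le> c * of_nat (card (A \<union> B))"
proof -
  have "of_nat (card (A \<union> B)) + of_nat (card (A \<inter> B))
      = (of_nat (card A) + of_nat (card B) :: 'b)"
    using card_Un_Int[OF assms(1,2)] by (metis of_nat_add)
  then have "c * of_nat (card (A \<union> B)) + c * of_nat (card (A \<inter> B))
      = c * of_nat (card A) + c * of_nat (card B)"
    by (metis distrib_left)
  then show ?thesis
    using assms(3-6) by linarith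
qed

lemma mediant_less_imp_less:
  fixes a b p q :: "'a::linordered_field"
  assumes "0 < p" "0 < q" "a / p < (a + b) / (p + q)"
  shows "a / p < b / q"
proof -
  have "a * (p + q) < (a + b) * p"
    using assms by (simp add: field_simps)
  then have "a * q < b * p"
    by (simp add: algebra_simps)
  then show ?thesis
    using assms(1,2) by (simp add: field_simps)
qed

locale client_weights =
  fixes V :: "'v set" and E :: "('v \<times> 'v) set" and w :: "'v \<Rightarrow> rat" and s :: "'f \<Rightarrow> 'v"
  assumes finite_V: "finite V" and weight_nonneg: "\<forall>v \<in> V. 0 \<le> w v"
begin

definition covered_weight :: "'v set \<Rightarrow> 'f set \<Rightarrow> rat" where
  "covered_weight Vst T = sum w (Aset V E s T \<inter> Vst)"

lemma ratio_eq_covered_weight: "ratio V E w s Vst T = covered_weight Vst T / of_nat (card T)"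
  unfolding ratio_def covered_weight_def ..

lemma Aset_subset: "Aset V E s T \<subseteq> V"
  unfolding Aset_def by blast

lemma Aset_Un: "Aset V E s (A \<union> B) = Aset V E s A \<union> Aset V E s B"
  unfolding Aset_def by blast

lemma finite_Aset: "finite (Aset V E s T)"
  using finite_V Aset_subset by (rule rev_finite_subset)

lemma covered_weight_nonneg: "0 \<le> covered_weight Vst T"
  unfolding covered_weight_def using weight_nonneg Aset_subset by (intro sum_nonneg) blast

lemma covered_weight_submodular:
  "covered_weight Vst (A \<union> B) + covered_weight Vst (A \<inter> B)
     \<le> covered_weight Vst A + covered_weight Vst B"
proof -
  have "Aset V E s (A \<union> B) \<inter> Vst = (Aset V E s A \<inter> Vst) \<union> (Aset V E s B \<inter> Vst)"
    unfolding Aset_Un by blast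
  moreover have "Aset V E s (A \<inter> B) \<inter> Vst \<subseteq> (Aset V E s A \<inter> Vst) \<inter> (Aset V E s B \<inter> Vst)"
    unfolding Aset_def by blast
  moreover have "\<forall>v \<in> (Aset V E s A \<inter> Vst) \<inter> (Aset V E s B \<inter> Vst). 0 \<le> w v"
    using weight_nonneg Aset_subset by blast
  ultimately show ?thesis
    unfolding covered_weight_def by (simp add: sum_Un_add_le finite_Aset)
qed

definition ratio_minimizer :: "'f set \<Rightarrow> 'v set \<Rightarrow> 'f set \<Rightarrow> bool" where
  "ratio_minimizer Fst Vst T \<longleftrightarrow> T \<subseteq> Fst \<and> T \<noteq> {} \<and>
     (\<forall>T'. T' \<subseteq> Fst \<and> T' \<noteq> {} \<longrightarrow> ratio V E w s Vst T \<le> ratio V E w s Vst T')"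

lemma is_MNS_iff_max_card_minimizer:
  "is_MNS V E w s Fst Vst T \<longleftrightarrow>
     ratio_minimizer Fst Vst T \<and> (\<forall>T'. ratio_minimizer Fst Vst T' \<longrightarrow> card T' \<le> card T)"
proof -
  have "ratio V E w s Vst T' = ratio V E w s Vst T"
    if "ratio_minimizer Fst Vst T" "ratio_minimizer Fst Vst T'" for T'
    using that unfolding ratio_minimizer_def by (blast intro: order_antisym)
  moreover have "ratio_minimizer Fst Vst T'"
    if "ratio_minimizer Fst Vst T" "T' \<subseteq> Fst" "T' \<noteq> {}"
      "ratio V E w s Vst T' = ratio V E w s Vst T" for T'
    using that unfolding ratio_minimizer_def by simp
  ultimately show ?thesis
    unfolding is_MNS_def by (metis ratio_minimizer_def)
qed

lemma is_MNS_nonempty_subset: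
  "is_MNS V E w s Fst Vst T \<Longrightarrow> T \<subseteq> Fst \<and> T \<noteq> {}"
  unfolding is_MNS_def by blast

lemma ratio_minimizer_Un:
  assumes "finite Fst" "ratio_minimizer Fst Vst T1" "ratio_minimizer Fst Vst T2"
  shows "ratio_minimizer Fst Vst (T1 \<union> T2)"
proof -
  let ?c = "ratio V E w s Vst T1"
  have T1: "T1 \<subseteq> Fst" "T1 \<noteq> {}" and T2: "T2 \<subseteq> Fst" "T2 \<noteq> {}"
    and min: "\<And>T. T \<subseteq> Fst \<Longrightarrow> T \<noteq> {} \<Longrightarrow> ?c \<le> ratio V E w s Vst T"
    using assms(2,3) unfolding ratio_minimizer_def by auto
  have "ratio V E w s Vst T2 = ?c"
    using assms(2,3) T1 T2 unfolding ratio_minimizer_def by (blast intro: order_antisym)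
  have card_pos: "0 < rat_of_nat (card T)" if "T \<subseteq> Fst" "T \<noteq> {}" for T
    using rev_finite_subset[OF assms(1) that(1)] that(2) by (simp add: card_gt_0_iff)
  have bound: "?c * of_nat (card T) \<le> covered_weight Vst T" if "T \<subseteq> Fst" for T
  proof (cases "T = {}")
    case False
    have "?c \<le> covered_weight Vst T / of_nat (card T)"
      using min[OF that False] by (simp only: ratio_eq_covered_weight[of Vst T])
    then show ?thesis
      using card_pos[OF that False] by (simp add: pos_le_divide_eq)
  qed (simp add: covered_weight_nonneg)
  have exact: "covered_weight Vst T = ratio V E w s Vst T * of_nat (card T)"
    if "T \<subseteq> Fst" "T \<noteq> {}" for T
    using card_pos[OF that] by (simp add: ratio_eq_covered_weight)
  have "covered_weight Vst (T1 \<union> T2) \<le> ?c * of_nat (card (T1 \<union> T2))"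
  proof (rule submodular_Un_le_mult_card)
    show "finite T1" "finite T2"
      using rev_finite_subset[OF assms(1)] T1(1) T2(1) by blast+
    show "covered_weight Vst T1 \<le> ?c * of_nat (card T1)"
      and "covered_weight Vst T2 \<le> ?c * of_nat (card T2)"
      using exact[OF T1] exact[OF T2] \<open>ratio V E w s Vst T2 = ?c\<close> by simp_all
    show "?c * of_nat (card (T1 \<inter> T2)) \<le> covered_weight Vst (T1 \<inter> T2)"
      using T1(1) by (intro bound) blast
  qed (rule covered_weight_submodular)
  moreover have "T1 \<union> T2 \<subseteq> Fst" "T1 \<union> T2 \<noteq> {}"
    using T1 T2 by auto
  ultimately have "ratio V E w s Vst (T1 \<union> T2) \<le> ?c"
    using card_pos by (simp add: ratio_eq_covered_weight[of Vst "T1 \<union> T2"] pos_divide_le_eq)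
  then show ?thesis
    using \<open>T1 \<union> T2 \<subseteq> Fst\<close> \<open>T1 \<union> T2 \<noteq> {}\<close> min
    unfolding ratio_minimizer_def by (blast intro: order_trans)
qed

lemma is_MNS_unique:
  assumes "finite Fst" "is_MNS V E w s Fst Vst T1" "is_MNS V E w s Fst Vst T2"
  shows "T1 = T2"
proof -
  have min: "ratio_minimizer Fst Vst T1" "ratio_minimizer Fst Vst T2"
    and max: "\<And>T. ratio_minimizer Fst Vst T \<Longrightarrow> card T \<le> card T1"
             "\<And>T. ratio_minimizer Fst Vst T \<Longrightarrow> card T \<le> card T2"
    using assms(2,3) unfolding is_MNS_iff_max_card_minimizer by auto
  have U: "ratio_minimizer Fst Vst (T1 \<union> T2)"
    using ratio_minimizer_Un[OF assms(1) min] .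
  have "finite (T1 \<union> T2)"
    using U rev_finite_subset[OF assms(1)] unfolding ratio_minimizer_def by blast
  then have "T1 = T1 \<union> T2" "T2 = T1 \<union> T2"
    using card_seteq[of "T1 \<union> T2" T1] card_seteq[of "T1 \<union> T2" T2] max[OF U] by auto
  then show ?thesis
    by simp
qed

lemma is_MNS_exists:
  assumes "finite Fst" "Fst \<noteq> {}"
  shows "\<exists>T. is_MNS V E w s Fst Vst T"
proof -
  let ?S = "{T. T \<subseteq> Fst \<and> T \<noteq> {}}"
  have "finite ?S"
    using assms(1) by (auto intro: rev_finite_subset[of "Pow Fst"])
  moreover have "?S \<noteq> {}"
    using assms(2) by blast
  ultimately obtain T0 where "is_arg_min (ratio V E w s Vst) (\<lambda>T. T \<in> ?S) T0"
    using ex_is_arg_min_if_finite by blast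
  then have "ratio_minimizer Fst Vst T0"
    unfolding ratio_minimizer_def is_arg_min_linorder by simp
  moreover have "card T < Suc (card Fst)" if "ratio_minimizer Fst Vst T" for T
    using card_mono[OF assms(1)] that unfolding ratio_minimizer_def by (simp add: less_Suc_eq_le)
  ultimately obtain T where "ratio_minimizer Fst Vst T"
      "\<forall>T'. ratio_minimizer Fst Vst T' \<longrightarrow> card T' \<le> card T"
    using ex_has_greatest_nat[of "ratio_minimizer Fst Vst" T0 card] by blast
  then show ?thesis
    unfolding is_MNS_iff_max_card_minimizer by blast
qed

lemma is_MNS_ratio_less_superset:
  assumes "finite Fst" "is_MNS V E w s Fst Vst T" "T \<subset> T'" "T' \<subseteq> Fst"
  shows "ratio V E w s Vst T < ratio V E w s Vst T'"
proof -
  have "T' \<noteq> {}"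
    using assms(3) by blast
  then have "ratio V E w s Vst T \<le> ratio V E w s Vst T'"
    and "ratio V E w s Vst T' = ratio V E w s Vst T \<Longrightarrow> card T' \<le> card T"
    using assms(2,4) unfolding is_MNS_def by blast+
  moreover have "card T < card T'"
    using assms(1,3,4) by (meson psubset_card_mono rev_finite_subset)
  ultimately show ?thesis
    by fastforce
qed

lemma is_MNS_ex1:
  assumes "finite Fst" "Fst \<noteq> {}"
  shows "\<exists>!T. is_MNS V E w s Fst Vst T"
  using is_MNS_exists[OF assms] is_MNS_unique[OF assms(1)] by blast

definition mns :: "'f set \<Rightarrow> 'v set \<Rightarrow> 'f set" where
  "mns Fst Vst = (THE T. is_MNS V E w s Fst Vst T)"

lemma is_MNS_mns:
  assumes "finite Fst" "Fst \<noteq> {}"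
  shows "is_MNS V E w s Fst Vst (mns Fst Vst)"
  unfolding mns_def using is_MNS_ex1[OF assms] by (rule theI')

end

locale facility_game = client_weights V E w s
  for V :: "'v set" and E :: "('v \<times> 'v) set" and w :: "'v \<Rightarrow> rat" and s :: "'f \<Rightarrow> 'v" +
  fixes F :: "'f set"
  assumes finite_F: "finite F"
begin

(* Beyond num_classes the remaining facility set is empty, and mns picks an unspecified set. *)
primrec prefix_union :: "nat \<Rightarrow> 'f set \<times> 'v set" where
  "prefix_union 0 = ({}, {})"
| "prefix_union (Suc i) =
     (let T = mns (F - fst (prefix_union i)) (V - snd (prefix_union i))
      in (fst (prefix_union i) \<union> T, snd (prefix_union i) \<union> Aset V E s T))"

definition class_F :: "nat \<Rightarrow> 'f set" where
  "class_F i = mns (F - fst (prefix_union i)) (V - snd (prefix_union i))"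

definition class_V :: "nat \<Rightarrow> 'v set" where
  "class_V i = Aset V E s (class_F i) - snd (prefix_union i)"

lemma prefix_union_Suc:
  "prefix_union (Suc i) =
     (fst (prefix_union i) \<union> class_F i, snd (prefix_union i) \<union> Aset V E s (class_F i))"
  by (simp add: class_F_def Let_def)

declare prefix_union.simps(2) [simp del]

lemma prefix_union_eq_Union_classes:
  "fst (prefix_union i) = \<Union>(class_F ` {..<i})" "snd (prefix_union i) = \<Union>(class_V ` {..<i})"
  by (induction i) (auto simp: prefix_union_Suc class_V_def lessThan_Suc)

lemma is_MNS_class_F:
  assumes "F - fst (prefix_union i) \<noteq> {}"
  shows "is_MNS V E w s (F - fst (prefix_union i)) (V - snd (prefix_union i)) (class_F i)"
  unfolding class_F_def using finite_F assms by (simp add: is_MNS_mns)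

lemma card_prefix_union:
  assumes "\<forall>j<i. F - fst (prefix_union j) \<noteq> {}"
  shows "fst (prefix_union i) \<subseteq> F \<and> i \<le> card (fst (prefix_union i))"
  using assms
proof (induction i)
  case (Suc i)
  then have IH: "fst (prefix_union i) \<subseteq> F" "i \<le> card (fst (prefix_union i))"
    and T: "class_F i \<subseteq> F - fst (prefix_union i)" "class_F i \<noteq> {}"
    using is_MNS_nonempty_subset[OF is_MNS_class_F] by auto
  have "finite (class_F i)" "finite (fst (prefix_union i))"
    using T(1) IH(1) rev_finite_subset[OF finite_F] by blast+
  then have "card (fst (prefix_union i) \<union> class_F i) = card (fst (prefix_union i)) + card (class_F i)"
    and "0 < card (class_F i)"
    using T by (auto intro: card_Un_disjoint simp: card_gt_0_iff)
  then show ?case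
    using IH T by (auto simp: prefix_union_Suc)
qed simp

lemma prefix_union_exhausts_F: "\<exists>k. F - fst (prefix_union k) = {}"
proof (rule ccontr)
  let ?U = "fst (prefix_union (Suc (card F)))"
  assume "\<nexists>k. F - fst (prefix_union k) = {}"
  then have "?U \<subseteq> F \<and> Suc (card F) \<le> card ?U"
    by (intro card_prefix_union) blast
  moreover have "?U \<subseteq> F \<Longrightarrow> card ?U \<le> card F"
    by (rule card_mono[OF finite_F])
  ultimately show False
    by linarith
qed

definition num_classes :: nat where
  "num_classes = (LEAST k. F - fst (prefix_union k) = {})"

lemma prefix_union_num_classes: "F - fst (prefix_union num_classes) = {}"
  unfolding num_classes_def using prefix_union_exhausts_F by (rule LeastI_ex)

lemma prefix_union_less_num_classes: "i < num_classes \<Longrightarrow> F - fst (prefix_union i) \<noteq> {}"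
  using not_less_Least unfolding num_classes_def by blast

lemma is_class_seq_canonical: "is_class_seq V E w s F num_classes class_F class_V"
  unfolding is_class_seq_def prefix_union_eq_Union_classes[symmetric]
  using prefix_union_num_classes prefix_union_less_num_classes is_MNS_class_F class_V_def by blast

lemma is_class_seqD:
  assumes "is_class_seq V E w s F k Fc Vc" "i < k"
  shows "F - \<Union>(Fc ` {..<i}) \<noteq> {}"
    and "is_MNS V E w s (F - \<Union>(Fc ` {..<i})) (V - \<Union>(Vc ` {..<i})) (Fc i)"
    and "Vc i = Aset V E s (Fc i) - \<Union>(Vc ` {..<i})"
  using assms unfolding is_class_seq_def by blast+

lemma is_class_seq_eq_canonical:
  assumes "is_class_seq V E w s F k Fc Vc" "i < k"
  shows "Fc i = class_F i \<and> Vc i = class_V i"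
  using assms(2)
proof (induction i rule: less_induct)
  case (less i)
  then have U: "\<Union>(Fc ` {..<i}) = fst (prefix_union i)" "\<Union>(Vc ` {..<i}) = snd (prefix_union i)"
    unfolding prefix_union_eq_Union_classes by (auto intro!: SUP_cong)
  have "finite (F - fst (prefix_union i))"
    using finite_F by simp
  moreover have "F - fst (prefix_union i) \<noteq> {}"
    and "is_MNS V E w s (F - fst (prefix_union i)) (V - snd (prefix_union i)) (Fc i)"
    and "Vc i = Aset V E s (Fc i) - snd (prefix_union i)"
    using is_class_seqD[OF assms(1) less.prems] unfolding U by simp_all
  ultimately show ?case
    using is_MNS_class_F is_MNS_unique class_V_def by metis
qed

lemma is_class_seq_length:
  assumes "is_class_seq V E w s F k Fc Vc"
  shows "k = num_classes"
proof -
  have U: "\<Union>(Fc ` {..<i}) = fst (prefix_union i)" if "i \<le> k" for i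
    using is_class_seq_eq_canonical[OF assms] that
    unfolding prefix_union_eq_Union_classes by (auto intro!: SUP_cong)
  have "F - fst (prefix_union k) = {}"
    using assms U[of k] unfolding is_class_seq_def by simp
  moreover have "F - fst (prefix_union i) \<noteq> {}" if "i < k" for i
    using is_class_seqD(1)[OF assms that] U[of i] that by simp
  ultimately show ?thesis
    unfolding num_classes_def by (intro Least_equality[symmetric]) (auto intro: leI)
qed

lemma is_class_seq_unique:
  assumes "is_class_seq V E w s F k Fc Vc" "is_class_seq V E w s F k' Fc' Vc'"
  shows "k = k' \<and> (\<forall>i<k. Fc i = Fc' i \<and> Vc i = Vc' i)"
  using is_class_seq_length[OF assms(1)] is_class_seq_length[OF assms(2)]
    is_class_seq_eq_canonical[OF assms(1)] is_class_seq_eq_canonical[OF assms(2)]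
  by simp

lemma load_class_less:
  assumes "Suc i < num_classes"
  shows "load w (class_F i) (class_V i) < load w (class_F (Suc i)) (class_V (Suc i))"
proof -
  let ?U = "fst (prefix_union i)" and ?W = "snd (prefix_union i)" and ?T = "class_F i \<union> class_F (Suc i)"
  have M: "is_MNS V E w s (F - ?U) (V - ?W) (class_F i)"
    using assms by (intro is_MNS_class_F prefix_union_less_num_classes) simp
  then have this_sub: "class_F i \<subseteq> F - ?U" "class_F i \<noteq> {}"
    using is_MNS_nonempty_subset by blast+
  have "class_F (Suc i) \<subseteq> F - fst (prefix_union (Suc i))" "class_F (Suc i) \<noteq> {}"
    using is_MNS_nonempty_subset[OF is_MNS_class_F[OF prefix_union_less_num_classes[OF assms]]] by blast+
  then have next_sub: "class_F (Suc i) \<subseteq> F - (?U \<union> class_F i)" "class_F (Suc i) \<noteq> {}"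
    unfolding prefix_union_Suc by simp_all
  have less: "ratio V E w s (V - ?W) (class_F i) < ratio V E w s (V - ?W) ?T"
    using M finite_F this_sub next_sub by (intro is_MNS_ratio_less_superset) auto
  have "finite (class_F i)" "finite (class_F (Suc i))"
    using this_sub next_sub rev_finite_subset[OF finite_F] by blast+
  then have pos: "0 < rat_of_nat (card (class_F i))" "0 < rat_of_nat (card (class_F (Suc i)))"
    using this_sub next_sub by (simp_all add: card_gt_0_iff)
  have "Aset V E s (class_F i) \<inter> (V - ?W) = class_V i"
    using Aset_subset unfolding class_V_def by blast
  moreover have "Aset V E s ?T \<inter> (V - ?W) = class_V i \<union> class_V (Suc i)"
    using Aset_subset unfolding class_V_def prefix_union_Suc snd_conv Aset_Un by blast
  moreover have "class_V i \<inter> class_V (Suc i) = {}"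
    unfolding class_V_def prefix_union_Suc snd_conv by blast
  moreover have "finite (class_V i)" "finite (class_V (Suc i))"
    unfolding class_V_def by (simp_all add: finite_Aset)
  moreover have "class_F i \<inter> class_F (Suc i) = {}"
    using next_sub by blast
  ultimately have "sum w (class_V i) / of_nat (card (class_F i)) <
      (sum w (class_V i) + sum w (class_V (Suc i))) /
      (of_nat (card (class_F i)) + of_nat (card (class_F (Suc i))))"
    using less \<open>finite (class_F i)\<close> \<open>finite (class_F (Suc i))\<close> unfolding ratio_def
    by (simp add: sum.union_disjoint card_Un_disjoint)
  then show ?thesis
    unfolding load_def using mediant_less_imp_less[OF pos] by blast
qed

lemma is_class_seq_load_less:
  assumes "is_class_seq V E w s F k Fc Vc" "Suc i < k"
  shows "load w (Fc i) (Vc i) < load w (Fc (Suc i)) (Vc (Suc i))"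
proof -
  have "Fc i = class_F i \<and> Vc i = class_V i"
    and "Fc (Suc i) = class_F (Suc i) \<and> Vc (Suc i) = class_V (Suc i)"
    using is_class_seq_eq_canonical[OF assms(1)] assms(2) by simp_all
  moreover have "Suc i < num_classes"
    using is_class_seq_length[OF assms(1)] assms(2) by simp
  ultimately show ?thesis
    using load_class_less by simp
qed

end

theorem mainTheorem6:
  fixes V :: "'v set" and E :: "('v \<times> 'v) set" and w :: "'v \<Rightarrow> rat"
    and F :: "'f set" and s :: "'f \<Rightarrow> 'v"
  assumes "finite V" and "E \<subseteq> V \<times> V" and "\<forall>v \<in> V. w v > 0"
    and "finite F" and "\<forall>f \<in> F. s f \<in> V"
  shows "(\<forall>Fst Vst. Fst \<noteq> {} \<and> Fst \<subseteq> F \<and> Vst \<subseteq> V \<longrightarrow>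
            (\<exists>!T. is_MNS V E w s Fst Vst T)) \<and>
         (\<exists>k Fc Vc. is_class_seq V E w s F k Fc Vc) \<and>
         (\<forall>k Fc Vc k' Fc' Vc'. is_class_seq V E w s F k Fc Vc \<and> is_class_seq V E w s F k' Fc' Vc'
            \<longrightarrow> k = k' \<and> (\<forall>i<k. Fc i = Fc' i \<and> Vc i = Vc' i)) \<and>
         (\<forall>k Fc Vc. is_class_seq V E w s F k Fc Vc \<longrightarrow>
            (\<forall>i. Suc i < k \<longrightarrow> load w (Fc i) (Vc i) < load w (Fc (Suc i)) (Vc (Suc i))))"
proof -
  interpret facility_game V E w s F
  proof
    show "finite V" "finite F"
      by fact+
    show "\<forall>v \<in> V. 0 \<le> w v"
      using assms(3) by (simp add: order_less_imp_le)
  qed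
  have "\<exists>!T. is_MNS V E w s Fst Vst T" if "Fst \<noteq> {}" "Fst \<subseteq> F" for Fst Vst
    using rev_finite_subset[OF finite_F that(2)] that(1) by (rule is_MNS_ex1)
  moreover have "\<exists>k Fc Vc. is_class_seq V E w s F k Fc Vc"
    using is_class_seq_canonical by blast
  ultimately show ?thesis
    using is_class_seq_load_less by simp (metis is_class_seq_unique)
qed

end
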